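(* Let $q\in\mathbb{C}$, $|q|<1$, $\ell\in\mathbb{N}$, $\alpha_j,\beta_j\in\mathbb{N}$ for $j=1,\dots,\ell$. For $k\ge1$ and a tuple $\mathbf{r}=(r_1,\dots,r_m)\in\mathbb{Z}_{\ge0}^m$ define $$\Psi_k(\mathbf{r})=(-1)^k\Big(\sum_{j=2}^k(-1)^j\,\mathfrak{z}_q^{(j-1,r_1,\dots,r_m)}[j,r_1,\dots,r_m]-\mathfrak{z}_q^{(1,r_1,\dots,r_m)}[1,r_1,\dots,r_m]\Big).$$ Then $$\Psi_{\alpha_1}(0^{\beta_1-1},\alpha_2,0^{\beta_2-1},\dots,\alpha_\ell,0^{\beta_\ell-1})=\Psi_{\beta_\ell}(0^{\alpha_\ell-1},\beta_{\ell-1},0^{\alpha_{\ell-1}-1},\dots,\beta_1,0^{\alpha_1-1}),$$ where $0^n$ denotes $n$ consecutive zeros. (In the paper's word notation: $\zeta^{\widetilde{\mathrm{IV}}}[\varphi_{\alpha_1}y^{\beta_1-1}\rho^{\alpha_2}y^{\beta_2}\cdots\rho^{\alpha_\ell}y^{\beta_\ell}]=\zeta^{\widetilde{\mathrm{IV}}}[\varphi_{\beta_\ell}y^{\alpha_\ell-1}\rho^{\beta_{\ell-1}}y^{\alpha_{\ell-1}}\cdots\rho^{\beta_1}y^{\alpha_1}]$ with $\varphi_k=(-1)^k(\sum_{j=2}^k(-1)^jz_j-\theta)$.)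
   Context: $\mathfrak{z}_q^{\mathbf{t}}[\mathbf{s}]=\sum_{k_1>\dots>k_d>0}\prod_j\frac{q^{k_jt_j}}{(1-q^{k_j})^{s_j}}$. The values $\mathfrak{z}_q^{(j-1,\mathbf{r})}[j,\mathbf{r}]$ ($j\ge2$) are type IV values and $\mathfrak{z}_q^{(1,\mathbf{r})}[1,\mathbf{r}]$ the regularizing type II values; in word form $z_j=\rho^{j-1}\pi y$, $\theta=\rho y$, with a type-$\widetilde{\mathrm{IV}}$ word $z_j\rho^{r_1}y\cdots\rho^{r_m}y$ (resp. $\theta\rho^{r_1}y\cdots\rho^{r_m}y$) realized as $\mathfrak{z}_q^{(j-1,\mathbf{r})}[j,\mathbf{r}]$ (resp. $\mathfrak{z}_q^{(1,\mathbf{r})}[1,\mathbf{r}]$). For $k=1$ the sum over $j$ is empty. *)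

theory Defs
  imports "HOL-Analysis.Analysis"
begin

definition qzeta :: "complex \<Rightarrow> nat list \<Rightarrow> nat list \<Rightarrow> complex" where
  "qzeta q t s =
     infsum (\<lambda>ks. \<Prod>j<length s. q ^ (ks ! j * t ! j) / (1 - q ^ (ks ! j)) ^ (s ! j))
       {ks :: nat list. length ks = length s \<and> sorted_wrt (>) ks \<and> (\<forall>k\<in>set ks. 0 < k)}"

definition Psi :: "complex \<Rightarrow> nat \<Rightarrow> nat list \<Rightarrow> complex" where
  "Psi q k r = (-1) ^ k *
     ((\<Sum>j\<in>{2..k}. (-1) ^ j * qzeta q ((j - 1) # r) (j # r)) - qzeta q (1 # r) (1 # r))"

end

theory Submission
  imports Defs
begin

text \<open>Write u(k) = q^k / (1 - q^k). Since q^(k(j-1)) / (1 - q^k)^j = u(k)^(j-1) + u(k)^j, the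
  alternating sum defining Psi_k(r) telescopes to the single diagonal value
  Z(s) = sum over k_1 > ... > k_d > 0 of prod_i u(k_i)^(s_i), where s = (k, r).
  Expanding every u(k)^s into geometric series and passing to the gaps between consecutive k_i
  turns Z(s) into the sum, over all labellings of the letters of the word F^(s_1) T ... F^(s_d) T
  by positive integers, of q^E, where the energy E adds up v * w over all pairs of an F-letter
  labelled v preceding a T-letter labelled w. Reversing the word and exchanging F and T preserves
  the energy, and on the words of the theorem this exchanges the two sides.\<close>

lemma summable_on_SigmaD1_banach:
  fixes f :: "'x \<Rightarrow> 'y \<Rightarrow> 'b::banach"
  assumes f: "(\<lambda>(x, y). f x y) summable_on Sigma A B" and x: "x \<in> A"
  shows "f x summable_on B x"
proof -
  have "(\<lambda>(x, y). f x y) summable_on Pair x ` B x"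
    using x by (intro summable_on_subset_banach[OF f]) auto
  then show ?thesis
    by (subst (asm) summable_on_reindex) (auto simp: inj_on_def comp_def)
qed

definition qratio :: "'a::{real_normed_field,banach} \<Rightarrow> nat \<Rightarrow> 'a" where
  "qratio q k = q ^ k / (1 - q ^ k)"

lemma qratio_power: "qratio q k ^ i = q ^ (k * i) / (1 - q ^ k) ^ i"
  by (simp add: qratio_def power_divide power_mult)

lemma qratio_power_add_power_Suc:
  assumes "1 - q ^ k \<noteq> 0"
  shows "qratio q k ^ i + qratio q k ^ Suc i = q ^ (k * i) / (1 - q ^ k) ^ Suc i"
proof -
  have "1 + qratio q k = 1 / (1 - q ^ k)"
    using assms by (simp add: qratio_def field_simps)
  moreover have "qratio q k ^ i + qratio q k ^ Suc i = qratio q k ^ i * (1 + qratio q k)"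
    by (simp add: algebra_simps)
  ultimately have "qratio q k ^ i + qratio q k ^ Suc i = q ^ (k * i) / (1 - q ^ k) ^ i * (1 / (1 - q ^ k))"
    by (simp only: qratio_power)
  also have "\<dots> = q ^ (k * i) / (1 - q ^ k) ^ Suc i"
    using assms by (simp add: field_simps)
  finally show ?thesis .
qed

definition pos_lists :: "nat \<Rightarrow> nat list set" where
  "pos_lists n = {ys. length ys = n \<and> (\<forall>y\<in>set ys. 0 < y)}"

lemma pos_lists_0 [simp]: "pos_lists 0 = {[]}"
  by (auto simp: pos_lists_def)

lemma bij_betw_Cons_pos_lists:
  "bij_betw (\<lambda>(v, ys). v # ys) ({1..} \<times> pos_lists n) (pos_lists (Suc n))"
  by (rule bij_betwI[where g = "\<lambda>ys. (hd ys, tl ys)"])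
     (auto simp: pos_lists_def Suc_le_eq length_Suc_conv)

lemma has_sum_pos_lists_Cons_slice:
  fixes q :: "'a::{real_normed_field,banach}"
  assumes "((\<lambda>ys. q ^ (k * sum_list ys)) has_sum S) (pos_lists n)"
  shows "((\<lambda>ys. q ^ (k * (v + sum_list ys))) has_sum (q ^ k) ^ v * S) (pos_lists n)"
  using has_sum_cmult_right[OF assms, of "(q ^ k) ^ v"]
  by (simp add: power_add power_mult[symmetric] algebra_simps)

lemma has_sum_qratio_geometric:
  fixes q :: "'a::{real_normed_field,banach}"
  assumes "norm q < 1" and "1 \<le> k"
  shows "((\<lambda>v. (q ^ k) ^ v * S) has_sum qratio q k * S) {1..}"
proof -
  have "norm (q ^ k) < 1"
    using assms by (simp add: norm_power power_less_one_iff)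
  then show ?thesis
    unfolding qratio_def by (rule has_sum_cmult_left[OF has_sum_geometric_from_1])
qed

lemma has_sum_pos_lists_Suc:
  fixes q :: "'a::{real_normed_field,banach}"
  assumes q: "norm q < 1" and k: "1 \<le> k"
    and IH: "((\<lambda>ys. q ^ (k * sum_list ys)) has_sum qratio q k ^ n) (pos_lists n)"
    and summable: "(\<lambda>(v, ys). q ^ (k * (v + sum_list ys))) summable_on ({1..} \<times> pos_lists n)"
  shows "((\<lambda>ys. q ^ (k * sum_list ys)) has_sum qratio q k ^ Suc n) (pos_lists (Suc n))"
proof -
  have "((\<lambda>(v, ys). q ^ (k * (v + sum_list ys))) has_sum qratio q k ^ Suc n) ({1..} \<times> pos_lists n)"
  proof (rule has_sum_SigmaI)
    show "((\<lambda>v. (q ^ k) ^ v * qratio q k ^ n) has_sum qratio q k ^ Suc n) {1..}"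
      using has_sum_qratio_geometric[OF q k] by simp
  qed (use has_sum_pos_lists_Cons_slice[OF IH] summable in simp_all)
  then show ?thesis
    using has_sum_reindex_bij_betw[OF bij_betw_Cons_pos_lists, of "\<lambda>ys. q ^ (k * sum_list ys)"]
    by (simp add: case_prod_unfold)
qed

lemma has_sum_pos_lists_nonneg:
  fixes r :: real
  assumes r: "0 \<le> r" "r < 1" and k: "1 \<le> k"
  shows "((\<lambda>ys. r ^ (k * sum_list ys)) has_sum qratio r k ^ n) (pos_lists n)"
proof (induction n)
  case 0
  then show ?case by (simp add: has_sum_finiteI)
next
  case (Suc n)
  have "(\<lambda>(v, ys). r ^ (k * (v + sum_list ys))) summable_on ({1..} \<times> pos_lists n)"
  proof (rule summable_on_SigmaI)
    show "(\<lambda>v. (r ^ k) ^ v * qratio r k ^ n) summable_on {1..}"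
      using has_sum_qratio_geometric[of r k "qratio r k ^ n"] r k by (auto intro: has_sum_imp_summable)
  qed (use has_sum_pos_lists_Cons_slice[OF Suc] r in simp_all)
  then show ?case
    using has_sum_pos_lists_Suc[OF _ k Suc] r by simp
qed

lemma has_sum_pos_lists:
  fixes q :: "'a::{real_normed_field,banach}"
  assumes q: "norm q < 1" and k: "1 \<le> k"
  shows "((\<lambda>ys. q ^ (k * sum_list ys)) has_sum qratio q k ^ n) (pos_lists n)"
proof (induction n)
  case 0
  then show ?case by (simp add: has_sum_finiteI)
next
  case (Suc n)
  have "(\<lambda>ys. norm q ^ (k * sum_list ys)) summable_on pos_lists (Suc n)"
    using has_sum_pos_lists_nonneg[of "norm q" k "Suc n"] q k has_sum_imp_summable by auto
  then have "(\<lambda>(v, ys). norm (q ^ (k * (v + sum_list ys)))) summable_on ({1..} \<times> pos_lists n)"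
    using summable_on_reindex_bij_betw[OF bij_betw_Cons_pos_lists, of "\<lambda>ys. norm q ^ (k * sum_list ys)"]
    by (simp add: case_prod_unfold norm_power)
  then have "(\<lambda>(v, ys). q ^ (k * (v + sum_list ys))) summable_on ({1..} \<times> pos_lists n)"
    by (rule abs_summable_summable[OF summable_on_cong[THEN iffD1, rotated]]) auto
  then show ?case
    using has_sum_pos_lists_Suc[OF q k Suc] by simp
qed

definition decr_lists :: "nat \<Rightarrow> nat \<Rightarrow> nat list set" where
  "decr_lists c n = {ks. length ks = n \<and> sorted_wrt (>) ks \<and> (\<forall>k\<in>set ks. c < k)}"

definition zeta_term :: "'a::{real_normed_field,banach} \<Rightarrow> nat list \<Rightarrow> nat list \<Rightarrow> 'a" where
  "zeta_term q s ks = (\<Prod>i<length s. qratio q (ks ! i) ^ (s ! i))"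

lemma decr_lists_subset_pos_lists: "decr_lists c n \<subseteq> pos_lists n"
  by (auto simp: decr_lists_def pos_lists_def)

lemma norm_qratio_le:
  fixes q :: "'a::{real_normed_field,banach}"
  assumes q: "norm q < 1" and k: "1 \<le> k"
  shows "norm (qratio q k) \<le> norm q ^ k / (1 - norm q)"
proof -
  have "norm q ^ k \<le> norm q"
    using power_decreasing[of 1 k "norm q"] q k by simp
  moreover have "1 - norm (q ^ k) \<le> norm (1 - q ^ k)"
    by (metis norm_one norm_triangle_ineq2)
  ultimately have "1 - norm q \<le> norm (1 - q ^ k)"
    by (simp add: norm_power)
  then show ?thesis
    unfolding qratio_def norm_divide norm_power using q by (intro frac_le) auto
qed

lemma norm_zeta_term_le:
  fixes q :: "'a::{real_normed_field,banach}"
  assumes q: "norm q < 1" and s: "s = Suc t # s'"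
    and ks: "ks \<in> decr_lists c (length s)"
  shows "norm (zeta_term q s ks) \<le> (1 / (1 - norm q)) ^ sum_list s * norm q ^ hd ks"
proof -
  define C where "C = 1 / (1 - norm q)"
  have C: "1 \<le> C" using q by (simp add: C_def)
  have qratio_C: "norm (qratio q k) \<le> C * norm q ^ k" if "1 \<le> k" for k
    using norm_qratio_le[OF q that] by (simp add: C_def)
  have qratio_C': "norm (qratio q k) \<le> C" if "1 \<le> k" for k
  proof -
    have "C * norm q ^ k \<le> C * 1"
      using C q by (intro mult_left_mono power_le_one) auto
    then show ?thesis
      using qratio_C[OF that] by simp
  qed
  obtain k0 ks' where ks_eq: "ks = k0 # ks'" and len: "length ks' = length s'"
    using ks s by (cases ks) (auto simp: decr_lists_def)
  have pos: "1 \<le> k" if "k \<in> set ks" for k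
    using ks that by (auto simp: decr_lists_def)
  have "(\<Prod>i<length s'. norm (qratio q (ks' ! i)) ^ (s' ! i)) \<le> (\<Prod>i<length s'. C ^ (s' ! i))"
  proof (rule prod_mono)
    fix i assume "i \<in> {..<length s'}"
    then have "1 \<le> ks' ! i"
      using len pos by (simp add: ks_eq)
    then show "0 \<le> norm (qratio q (ks' ! i)) ^ (s' ! i) \<and> norm (qratio q (ks' ! i)) ^ (s' ! i) \<le> C ^ (s' ! i)"
      using qratio_C' by (simp add: power_mono)
  qed
  also have "\<dots> = C ^ sum_list s'"
    by (simp add: power_sum sum_list_sum_nth atLeast0LessThan)
  finally have tail: "(\<Prod>i<length s'. norm (qratio q (ks' ! i)) ^ (s' ! i)) \<le> C ^ sum_list s'" .
  have head: "norm (qratio q k0) ^ Suc t \<le> C * norm q ^ k0 * C ^ t"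
    unfolding power_Suc
    using qratio_C[of k0] qratio_C'[of k0] pos[of k0] ks_eq C by (intro mult_mono power_mono) auto
  have "norm (zeta_term q s ks) = norm (qratio q k0) ^ Suc t * (\<Prod>i<length s'. norm (qratio q (ks' ! i)) ^ (s' ! i))"
    unfolding zeta_term_def s ks_eq length_Cons prod.lessThan_Suc_shift
    by (simp add: norm_mult prod_norm[symmetric] norm_power)
  also have "\<dots> \<le> C * norm q ^ k0 * C ^ t * C ^ sum_list s'"
    using head tail C by (intro mult_mono) (auto intro!: prod_nonneg)
  also have "\<dots> = C ^ sum_list s * norm q ^ hd ks"
    by (simp add: s ks_eq power_add)
  finally show ?thesis by (simp add: C_def)
qed

lemma power_hd_le_power_sum_list:
  fixes \<rho> :: real
  assumes \<rho>: "0 < \<rho>" "\<rho> < 1" and ks: "ks \<in> decr_lists c n" "0 < n"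
  shows "\<rho> ^ hd ks \<le> (\<rho> powr (1 / n)) ^ sum_list ks"
proof -
  have "\<forall>k\<in>set ks. k \<le> hd ks"
    using ks by (cases ks) (auto simp: decr_lists_def less_imp_le)
  then have "sum_list ks \<le> n * hd ks"
    using sum_list_mono[of ks id "\<lambda>_. hd ks"] ks by (simp add: decr_lists_def sum_list_triv)
  then have "real (sum_list ks) * (1 / n) \<le> hd ks"
    using ks by (simp add: field_simps flip: of_nat_mult)
  then have "\<rho> powr hd ks \<le> \<rho> powr (real (sum_list ks) * (1 / n))"
    using \<rho> by (intro powr_mono') auto
  then show ?thesis
    using \<rho> by (simp add: powr_power powr_realpow)
qed

lemma zeta_term_summable:
  fixes q :: "'a::{real_normed_field,banach}"
  assumes q: "norm q < 1" and s: "s \<noteq> []" "1 \<le> hd s"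
  shows "zeta_term q s summable_on decr_lists c (length s)"
proof -
  define n where "n = length s"
  define \<rho> where "\<rho> = (1 + norm q) / 2"
  define \<sigma> where "\<sigma> = \<rho> powr (1 / n)"
  define C where "C = 1 / (1 - norm q)"
  obtain t s' where s_eq: "s = Suc t # s'"
    using s by (cases s) (auto dest: Suc_le_D)
  have n: "0 < n" using s by (simp add: n_def)
  have \<rho>: "0 < \<rho>" "\<rho> < 1" "norm q \<le> \<rho>"
    unfolding \<rho>_def using q norm_ge_zero[of q] by (simp_all del: norm_ge_zero)
  have \<sigma>: "0 < \<sigma>" "\<sigma> < 1"
    using \<rho> n powr_less_mono2[of "1 / n" \<rho> 1] by (auto simp: \<sigma>_def)
  have C: "0 \<le> C" using q by (simp add: C_def)
  have "(\<lambda>ks. C ^ sum_list s * \<sigma> ^ (1 * sum_list ks)) summable_on pos_lists n"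
    using has_sum_pos_lists_nonneg[of \<sigma> 1 n] \<sigma> by (auto intro: summable_on_cmult_right has_sum_imp_summable)
  then have "(\<lambda>ks. C ^ sum_list s * \<sigma> ^ sum_list ks) summable_on decr_lists c n"
    by (auto intro: summable_on_subset[OF _ decr_lists_subset_pos_lists])
  \<comment> \<open>the largest index hd ks dominates the mean of ks, hence q^(hd ks) decays like \<sigma>^(sum_list ks)\<close>
  moreover have "norm (zeta_term q s ks) \<le> C ^ sum_list s * \<sigma> ^ sum_list ks" if ks: "ks \<in> decr_lists c n" for ks
  proof -
    have "norm (zeta_term q s ks) \<le> C ^ sum_list s * norm q ^ hd ks"
      using norm_zeta_term_le[OF q s_eq] s s_eq ks by (simp add: C_def n_def)
    also have "\<dots> \<le> C ^ sum_list s * \<rho> ^ hd ks"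
      using C \<rho> by (intro mult_left_mono power_mono) auto
    also have "\<dots> \<le> C ^ sum_list s * \<sigma> ^ sum_list ks"
      using power_hd_le_power_sum_list[OF \<rho>(1,2) ks n] C by (intro mult_left_mono) (auto simp: \<sigma>_def)
    finally show ?thesis .
  qed
  ultimately show ?thesis
    unfolding n_def by (rule abs_summable_summable[OF Infinite_Sum.abs_summable_on_comparison_test'])
qed

text \<open>The index s = (s_1, ..., s_d) is encoded by the word F^(s_1) T ... F^(s_d) T, with False
  for F and True for T. A configuration labels each letter by a positive integer; the extra
  weight c * false_mass accounts for the constraint k_d > c of decr_lists c.\<close>

definition zeta_word :: "nat list \<Rightarrow> bool list" where
  "zeta_word s = concat (map (\<lambda>x. replicate x False @ [True]) s)"

definition configs :: "bool list \<Rightarrow> (bool \<times> nat) list set" where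
  "configs w = {z. map fst z = w \<and> (\<forall>p\<in>set z. 0 < snd p)}"

definition true_mass :: "(bool \<times> nat) list \<Rightarrow> nat" where
  "true_mass z = sum_list (map (\<lambda>(b, v). if b then v else 0) z)"

definition false_mass :: "(bool \<times> nat) list \<Rightarrow> nat" where
  "false_mass z = sum_list (map (\<lambda>(b, v). if b then 0 else v) z)"

fun energy :: "(bool \<times> nat) list \<Rightarrow> nat" where
  "energy [] = 0"
| "energy ((b, v) # z) = (if b then 0 else v * true_mass z) + energy z"

definition config_weight :: "'a::{real_normed_field,banach} \<Rightarrow> nat \<Rightarrow> (bool \<times> nat) list \<Rightarrow> 'a" where
  "config_weight q c z = q ^ (energy z + c * false_mass z)"

definition config_sum :: "'a::{real_normed_field,banach} \<Rightarrow> bool list \<Rightarrow> nat \<Rightarrow> 'a" where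
  "config_sum q w c = infsum (config_weight q c) (configs w)"

lemma zeta_word_simps [simp]:
  "zeta_word [] = []"
  "zeta_word (x # s) = replicate x False @ True # zeta_word s"
  "zeta_word (s @ s') = zeta_word s @ zeta_word s'"
  by (simp_all add: zeta_word_def)

lemma zeta_word_replicate_0 [simp]: "zeta_word (replicate n 0) = replicate n True"
  by (induction n) auto

lemma true_mass_simps [simp]:
  "true_mass [] = 0"
  "true_mass ((b, v) # z) = (if b then v else 0) + true_mass z"
  "true_mass (z @ z') = true_mass z + true_mass z'"
  "true_mass (map (Pair False) ys) = 0"
  by (induction ys) (auto simp: true_mass_def)

lemma false_mass_simps [simp]:
  "false_mass [] = 0"
  "false_mass ((b, v) # z) = (if b then 0 else v) + false_mass z"
  "false_mass (z @ z') = false_mass z + false_mass z'"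
  "false_mass (map (Pair False) ys) = sum_list ys"
  by (induction ys) (auto simp: false_mass_def)

lemma energy_append: "energy (z @ z') = energy z + energy z' + false_mass z * true_mass z'"
  by (induction z rule: energy.induct) (auto simp: algebra_simps)

lemma energy_map_Pair_False [simp]: "energy (map (Pair False) ys) = 0"
  by (induction ys) auto

lemma config_weight_snoc_block:
  "config_weight q c (zw @ map (Pair False) ys @ [(True, a)])
     = config_weight q (c + a) zw * q ^ ((c + a) * sum_list ys)"
  by (simp add: config_weight_def energy_append power_add[symmetric] algebra_simps)

lemma zeta_term_snoc:
  "length ks = length s \<Longrightarrow> zeta_term q (s @ [x]) (ks @ [k]) = zeta_term q s ks * qratio q k ^ x"
  by (simp add: zeta_term_def nth_append)

lemma bij_betw_snoc_decr_lists:
  "bij_betw (\<lambda>(a, ks). ks @ [c + a]) (SIGMA a:{1..}. decr_lists (c + a) n) (decr_lists c (Suc n))"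
proof (rule bij_betwI[where g = "\<lambda>ks. (last ks - c, butlast ks)"])
  show "(\<lambda>(a, ks). ks @ [c + a]) \<in> (SIGMA a:{1..}. decr_lists (c + a) n) \<rightarrow> decr_lists c (Suc n)"
    by (fastforce simp: decr_lists_def sorted_wrt_append)
  show "(\<lambda>ks. (last ks - c, butlast ks)) \<in> decr_lists c (Suc n) \<rightarrow> (SIGMA a:{1..}. decr_lists (c + a) n)"
  proof
    fix ks assume ks: "ks \<in> decr_lists c (Suc n)"
    then have "ks \<noteq> []"
      by (auto simp: decr_lists_def)
    then have "ks = butlast ks @ [last ks]" "last ks \<in> set ks"
      by simp_all
    with ks have "sorted_wrt (>) (butlast ks @ [last ks])" "c < last ks"
      by (simp_all add: decr_lists_def)
    with ks show "(last ks - c, butlast ks) \<in> (SIGMA a:{1..}. decr_lists (c + a) n)"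
      by (auto simp: decr_lists_def sorted_wrt_append)
  qed
  show "(\<lambda>(a, ks). ks @ [c + a]) (last ks - c, butlast ks) = ks" if "ks \<in> decr_lists c (Suc n)" for ks
  proof -
    have "ks \<noteq> []"
      using that by (auto simp: decr_lists_def)
    with that have "c < last ks"
      by (simp add: decr_lists_def)
    with \<open>ks \<noteq> []\<close> show ?thesis
      by (auto simp: decr_lists_def)
  qed
qed auto

lemma map_Pair_False_snd: "map fst z = replicate n False \<Longrightarrow> map (Pair False) (map snd z) = z"
  by (induction z arbitrary: n) (auto simp: Cons_replicate_eq)

lemma configs_append:
  "configs (w @ w') = {z @ z' |z z'. z \<in> configs w \<and> z' \<in> configs w'}"
  by (auto simp: configs_def map_eq_append_conv) (blast | force)+

lemma configs_replicate_False: "configs (replicate x False) = map (Pair False) ` pos_lists x"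
proof (intro set_eqI iffI)
  fix z assume "z \<in> configs (replicate x False)"
  then have fst_z: "map fst z = replicate x False" and pos: "\<forall>p\<in>set z. 0 < snd p"
    by (simp_all add: configs_def)
  have "length z = x"
    using arg_cong[OF fst_z, of length] by simp
  then have "z = map (Pair False) (map snd z)" "map snd z \<in> pos_lists x"
    using map_Pair_False_snd[OF fst_z] pos by (auto simp: pos_lists_def)
  then show "z \<in> map (Pair False) ` pos_lists x"
    by (rule image_eqI)
qed (auto simp: configs_def pos_lists_def comp_def map_replicate_const)

lemma configs_True: "configs [True] = (\<lambda>a. [(True, a)]) ` {1..}"
  by (auto simp: configs_def Suc_le_eq image_iff length_Suc_conv)

lemma bij_betw_snoc_configs:
  "bij_betw (\<lambda>(a, zw, ys). zw @ map (Pair False) ys @ [(True, a)])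
     ({1..} \<times> (configs w \<times> pos_lists x)) (configs (w @ replicate x False @ [True]))"
proof (rule bij_betw_imageI)
  show "inj_on (\<lambda>(a, zw, ys). zw @ map (Pair False) ys @ [(True, a)]) ({1..} \<times> (configs w \<times> pos_lists x))"
  proof (rule inj_onI)
    fix p p' :: "nat \<times> (bool \<times> nat) list \<times> nat list"
    assume "p \<in> {1..} \<times> (configs w \<times> pos_lists x)" "p' \<in> {1..} \<times> (configs w \<times> pos_lists x)"
    moreover obtain a zw ys a' zw' ys' where p: "p = (a, zw, ys)" "p' = (a', zw', ys')"
      by (metis prod.exhaust)
    ultimately have "length zw = length zw'" "length (map (Pair False) ys) = length (map (Pair False) ys')"
      by (auto simp: configs_def pos_lists_def dest!: arg_cong[where f = length])
    moreover assume "(\<lambda>(a, zw, ys). zw @ map (Pair False) ys @ [(True, a)]) p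
      = (\<lambda>(a, zw, ys). zw @ map (Pair False) ys @ [(True, a)]) p'"
    ultimately show "p = p'"
      by (simp add: p inj_map_eq_map inj_on_def)
  qed
  show "(\<lambda>(a, zw, ys). zw @ map (Pair False) ys @ [(True, a)]) ` ({1..} \<times> (configs w \<times> pos_lists x))
      = configs (w @ replicate x False @ [True])" (is "?f ` ?A = ?B")
  proof (intro equalityI subsetI)
    fix z assume "z \<in> ?f ` ?A"
    then show "z \<in> ?B"
      by (fastforce simp: configs_def pos_lists_def comp_def map_replicate_const)
  next
    fix z assume "z \<in> ?B"
    then obtain zw z' where z: "z = zw @ z'" "zw \<in> configs w"
      and "z' \<in> configs (replicate x False @ [True])"
      unfolding configs_append by blast
    then obtain zy zt where "z' = zy @ zt" "zy \<in> map (Pair False) ` pos_lists x"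
      and "zt \<in> (\<lambda>a. [(True, a)]) ` {1..}"
      unfolding configs_append configs_replicate_False configs_True by blast
    then obtain a ys where "z' = map (Pair False) ys @ [(True, a)]" "ys \<in> pos_lists x" "a \<in> {1..}"
      by blast
    with z show "z \<in> ?f ` ?A"
      by (intro image_eqI[of _ _ "(a, zw, ys)"]) auto
  qed
qed

lemma has_sum_zeta_term_snoc:
  assumes IH: "\<And>k. (zeta_term q s has_sum config_sum q (zeta_word s) k) (decr_lists k (length s))"
    and summable: "zeta_term q (s @ [x]) summable_on decr_lists c (Suc (length s))"
  shows "((\<lambda>a. config_sum q (zeta_word s) (c + a) * qratio q (c + a) ^ x)
           has_sum infsum (zeta_term q (s @ [x])) (decr_lists c (Suc (length s)))) {1..}"
proof -
  let ?T = "infsum (zeta_term q (s @ [x])) (decr_lists c (Suc (length s)))"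
  have "((\<lambda>(a, ks). zeta_term q (s @ [x]) (ks @ [c + a])) has_sum ?T)
          (SIGMA a:{1..}. decr_lists (c + a) (length s))"
    using has_sum_reindex_bij_betw[OF bij_betw_snoc_decr_lists, of "zeta_term q (s @ [x])"] summable
    by (simp add: case_prod_unfold)
  then have "((\<lambda>(a, ks). zeta_term q s ks * qratio q (c + a) ^ x) has_sum ?T)
               (SIGMA a:{1..}. decr_lists (c + a) (length s))"
    by (rule has_sum_cong[THEN iffD1, rotated]) (auto simp: zeta_term_snoc decr_lists_def)
  then show ?thesis
    by (rule has_sum_SigmaD) (use has_sum_cmult_left[OF IH] in simp)
qed

lemma has_sum_config_block:
  fixes q :: "'a::{real_normed_field,banach}"
  assumes q: "norm q < 1" and k: "1 \<le> k"
    and summable: "config_weight q k summable_on configs w"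
    and summable_block: "(\<lambda>(zw, ys). config_weight q k zw * q ^ (k * sum_list ys)) summable_on (configs w \<times> pos_lists x)"
  shows "((\<lambda>(zw, ys). config_weight q k zw * q ^ (k * sum_list ys))
           has_sum config_sum q w k * qratio q k ^ x) (configs w \<times> pos_lists x)"
proof (rule has_sum_SigmaI)
  show "((\<lambda>zw. config_weight q k zw * qratio q k ^ x) has_sum config_sum q w k * qratio q k ^ x) (configs w)"
    unfolding config_sum_def using summable by (intro has_sum_cmult_left) simp
qed (use has_sum_cmult_right[OF has_sum_pos_lists[OF q k]] summable_block in simp_all)

lemma has_sum_zeta_term_config_sum_snoc:
  fixes q :: "'a::{real_normed_field,banach}"
  assumes q: "norm q < 1"
    and IH: "\<And>k. (zeta_term q s has_sum config_sum q (zeta_word s) k) (decr_lists k (length s))"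
    and IH_summable: "\<And>k. config_weight q k summable_on configs (zeta_word s)"
    and hd: "1 \<le> hd (s @ [x])"
    and summable_joint: "(\<lambda>(a, zw, ys). config_weight q (c + a) zw * q ^ ((c + a) * sum_list ys))
                           summable_on ({1..} \<times> (configs (zeta_word s) \<times> pos_lists x))"
  shows "(zeta_term q (s @ [x]) has_sum config_sum q (zeta_word (s @ [x])) c) (decr_lists c (length (s @ [x])))"
    and "config_weight q c summable_on configs (zeta_word (s @ [x]))"
proof -
  let ?w = "zeta_word s"
  let ?T = "infsum (zeta_term q (s @ [x])) (decr_lists c (Suc (length s)))"
  have summable: "zeta_term q (s @ [x]) summable_on decr_lists c (Suc (length s))"
    using zeta_term_summable[OF q _ hd] by simp
  have "((\<lambda>(a, zw, ys). config_weight q (c + a) zw * q ^ ((c + a) * sum_list ys)) has_sum ?T)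
          ({1..} \<times> (configs ?w \<times> pos_lists x))"
  proof (rule has_sum_SigmaI[OF _ has_sum_zeta_term_snoc[OF IH summable]])
    fix a :: nat assume a: "a \<in> {1..}"
    have "(\<lambda>(zw, ys). config_weight q (c + a) zw * q ^ ((c + a) * sum_list ys)) summable_on (configs ?w \<times> pos_lists x)"
      using summable_on_SigmaD1_banach[where f = "\<lambda>a (zw, ys). config_weight q (c + a) zw * q ^ ((c + a) * sum_list ys)",
          OF summable_joint a] by simp
    with a show "((\<lambda>p. (\<lambda>(a, zw, ys). config_weight q (c + a) zw * q ^ ((c + a) * sum_list ys)) (a, p))
                 has_sum config_sum q ?w (c + a) * qratio q (c + a) ^ x) (configs ?w \<times> pos_lists x)"
      using has_sum_config_block[OF q _ IH_summable] by simp
  qed (use summable_joint in simp)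
  then have "((\<lambda>(a, zw, ys). config_weight q c (zw @ map (Pair False) ys @ [(True, a)])) has_sum ?T)
               ({1..} \<times> (configs ?w \<times> pos_lists x))"
    by (simp add: config_weight_snoc_block case_prod_unfold)
  then have "(config_weight q c has_sum ?T) (configs (zeta_word (s @ [x])))"
    using has_sum_reindex_bij_betw[OF bij_betw_snoc_configs[of ?w x], of "config_weight q c"]
    by (simp add: case_prod_unfold)
  moreover from this have "config_sum q (zeta_word (s @ [x])) c = ?T"
    by (simp add: config_sum_def infsumI)
  ultimately show "(zeta_term q (s @ [x]) has_sum config_sum q (zeta_word (s @ [x])) c) (decr_lists c (length (s @ [x])))"
    and "config_weight q c summable_on configs (zeta_word (s @ [x]))"
    using summable by (auto simp: has_sum_imp_summable)
qed

text \<open>The summability of the sum over the joint index set of a step is a hypothesis: for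
  nonnegative reals it follows from the iterated sums, and in general from absolute summability,
  i.e. from the nonnegative case at norm q.\<close>

lemma has_sum_zeta_term_config_sum_induct:
  fixes q :: "'a::{real_normed_field,banach}"
  assumes q: "norm q < 1"
    and summable_joint: "\<And>s x c. 1 \<le> hd (s @ [x]) \<Longrightarrow>
       (\<forall>k. (zeta_term q s has_sum config_sum q (zeta_word s) k) (decr_lists k (length s))
            \<and> config_weight q k summable_on configs (zeta_word s)) \<Longrightarrow>
       (\<lambda>(a, zw, ys). config_weight q (c + a) zw * q ^ ((c + a) * sum_list ys))
         summable_on ({1..} \<times> (configs (zeta_word s) \<times> pos_lists x))"
    and s: "s = [] \<or> 1 \<le> hd s"
  shows "(zeta_term q s has_sum config_sum q (zeta_word s) c) (decr_lists c (length s))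
         \<and> config_weight q c summable_on configs (zeta_word s)"
  using s
proof (induction s arbitrary: c rule: rev_induct)
  case Nil
  have "decr_lists c 0 = {[]}" "configs [] = {[]}"
    by (auto simp: decr_lists_def configs_def)
  then show ?case
    by (simp add: config_sum_def config_weight_def zeta_term_def has_sum_finiteI)
next
  case (snoc x s)
  then have hd: "1 \<le> hd (s @ [x])"
    by simp
  then have "s = [] \<or> 1 \<le> hd s"
    by (cases s) auto
  with snoc.IH have IH: "\<forall>k. (zeta_term q s has_sum config_sum q (zeta_word s) k) (decr_lists k (length s))
                            \<and> config_weight q k summable_on configs (zeta_word s)"
    by blast
  then show ?case
    using has_sum_zeta_term_config_sum_snoc[OF q _ _ hd summable_joint[OF hd IH]] by blast
qed

lemma config_weight_nonneg: "0 \<le> r \<Longrightarrow> 0 \<le> config_weight (r::real) k z"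
  by (simp add: config_weight_def)

lemma norm_config_weight: "norm (config_weight q k z) = config_weight (norm q) k z"
  by (simp add: config_weight_def norm_power)

lemma summable_config_block_nonneg:
  fixes r :: real
  assumes r: "0 \<le> r" "r < 1" and k: "1 \<le> k"
    and summable: "config_weight r k summable_on configs w"
  shows "(\<lambda>(zw, ys). config_weight r k zw * r ^ (k * sum_list ys)) summable_on (configs w \<times> pos_lists x)"
proof (rule summable_on_SigmaI)
  show "(\<lambda>zw. config_weight r k zw * qratio r k ^ x) summable_on configs w"
    using summable by (rule summable_on_cmult_left)
next
  fix zw
  have "norm r < 1"
    using r by simp
  then show "((\<lambda>ys. (\<lambda>(zw, ys). config_weight r k zw * r ^ (k * sum_list ys)) (zw, ys))
               has_sum config_weight r k zw * qratio r k ^ x) (pos_lists x)"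
    using has_sum_cmult_right[OF has_sum_pos_lists[of r k x], of "config_weight r k zw"] k by simp
qed (use r config_weight_nonneg in simp)

lemma has_sum_zeta_term_config_sum_nonneg:
  fixes r :: real
  assumes r: "0 \<le> r" "r < 1" and s: "s = [] \<or> 1 \<le> hd s"
  shows "(zeta_term r s has_sum config_sum r (zeta_word s) c) (decr_lists c (length s))
         \<and> config_weight r c summable_on configs (zeta_word s)"
proof (rule has_sum_zeta_term_config_sum_induct[OF _ _ s])
  show "norm r < 1"
    using r by simp
  fix s x c
  assume hd: "1 \<le> hd (s @ [x])"
    and IH: "\<forall>k. (zeta_term r s has_sum config_sum r (zeta_word s) k) (decr_lists k (length s))
                 \<and> config_weight r k summable_on configs (zeta_word s)"
  show "(\<lambda>(a, zw, ys). config_weight r (c + a) zw * r ^ ((c + a) * sum_list ys))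
          summable_on ({1..} \<times> (configs (zeta_word s) \<times> pos_lists x))"
  proof (rule summable_on_SigmaI)
    fix a :: nat assume "a \<in> {1..}"
    then have k: "1 \<le> c + a"
      by simp
    have summable: "config_weight r (c + a) summable_on configs (zeta_word s)"
      using IH by blast
    have "norm r < 1"
      using r by simp
    then show "((\<lambda>p. (\<lambda>(a, zw, ys). config_weight r (c + a) zw * r ^ ((c + a) * sum_list ys)) (a, p))
                 has_sum config_sum r (zeta_word s) (c + a) * qratio r (c + a) ^ x)
                 (configs (zeta_word s) \<times> pos_lists x)"
      using has_sum_config_block[OF _ k summable summable_config_block_nonneg[OF r k summable]] by simp
  next
    have "zeta_term r (s @ [x]) summable_on decr_lists c (Suc (length s))"
      using zeta_term_summable[of r "s @ [x]"] r hd by simp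
    then show "(\<lambda>a. config_sum r (zeta_word s) (c + a) * qratio r (c + a) ^ x) summable_on {1..}"
      using has_sum_zeta_term_snoc IH has_sum_imp_summable by blast
  qed (use r config_weight_nonneg in auto)
qed

lemma has_sum_zeta_term_config_sum:
  fixes q :: "'a::{real_normed_field,banach}"
  assumes q: "norm q < 1" and s: "s = [] \<or> 1 \<le> hd s"
  shows "(zeta_term q s has_sum config_sum q (zeta_word s) c) (decr_lists c (length s))"
proof -
  have "(zeta_term q s has_sum config_sum q (zeta_word s) c) (decr_lists c (length s))
         \<and> config_weight q c summable_on configs (zeta_word s)"
  proof (rule has_sum_zeta_term_config_sum_induct[OF q _ s])
    fix s :: "nat list" and x c :: nat
    assume hd: "1 \<le> hd (s @ [x])"
    have "config_weight (norm q) c summable_on configs (zeta_word s @ replicate x False @ [True])"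
      using has_sum_zeta_term_config_sum_nonneg[of "norm q" "s @ [x]" c] q hd by simp
    then have "(\<lambda>(a, zw, ys). norm (config_weight q c (zw @ map (Pair False) ys @ [(True, a)])))
                 summable_on ({1..} \<times> (configs (zeta_word s) \<times> pos_lists x))"
      using summable_on_reindex_bij_betw[OF bij_betw_snoc_configs, of "config_weight (norm q) c"]
      by (simp add: norm_config_weight case_prod_unfold)
    then have "(\<lambda>p. norm ((\<lambda>(a, zw, ys). config_weight q (c + a) zw * q ^ ((c + a) * sum_list ys)) p))
                 summable_on ({1..} \<times> (configs (zeta_word s) \<times> pos_lists x))"
      by (simp add: config_weight_snoc_block case_prod_unfold)
    then show "(\<lambda>(a, zw, ys). config_weight q (c + a) zw * q ^ ((c + a) * sum_list ys))
                 summable_on ({1..} \<times> (configs (zeta_word s) \<times> pos_lists x))"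
      by (rule abs_summable_summable)
  qed
  then show ?thesis ..
qed

definition dual_config :: "(bool \<times> nat) list \<Rightarrow> (bool \<times> nat) list" where
  "dual_config z = rev (map (apfst Not) z)"

lemma dual_config_simps [simp]:
  "dual_config [] = []"
  "dual_config ((b, v) # z) = dual_config z @ [(\<not> b, v)]"
  "dual_config (z @ z') = dual_config z' @ dual_config z"
  by (simp_all add: dual_config_def)

lemma dual_config_dual_config [simp]: "dual_config (dual_config z) = z"
  by (induction z) auto

lemma mass_dual_config [simp]:
  "true_mass (dual_config z) = false_mass z"
  "false_mass (dual_config z) = true_mass z"
  by (induction z) auto

lemma energy_dual_config [simp]: "energy (dual_config z) = energy z"
  by (induction z rule: energy.induct) (simp_all add: energy_append)

lemma dual_config_configs: "z \<in> configs w \<Longrightarrow> dual_config z \<in> configs (map Not (rev w))"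
  by (auto simp: configs_def dual_config_def rev_map comp_def)

lemma bij_betw_dual_config: "bij_betw dual_config (configs w) (configs (map Not (rev w)))"
proof (rule bij_betwI[where g = dual_config])
  have "map Not (rev (map Not (rev w))) = w"
    by (simp add: rev_map comp_def)
  then show "dual_config \<in> configs (map Not (rev w)) \<rightarrow> configs w"
    using dual_config_configs[of _ "map Not (rev w)"] by auto
qed (auto intro: dual_config_configs)

lemma config_sum_dual: "config_sum q (map Not (rev w)) 0 = config_sum q w 0"
proof -
  have "config_sum q (map Not (rev w)) 0 = infsum (\<lambda>z. config_weight q 0 (dual_config z)) (configs w)"
    unfolding config_sum_def by (rule infsum_reindex_bij_betw[OF bij_betw_dual_config, symmetric])
  also have "\<dots> = config_sum q w 0"
    unfolding config_sum_def config_weight_def by simp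
  finally show ?thesis .
qed

lemma qzeta_diagonal: "qzeta q s s = infsum (zeta_term q s) (decr_lists 0 (length s))"
  unfolding qzeta_def decr_lists_def zeta_term_def qratio_power ..

lemma qzeta_diagonal_eq_config_sum:
  assumes "norm q < 1" and "1 \<le> x"
  shows "qzeta q (x # r) (x # r) = config_sum q (zeta_word (x # r)) 0"
  using has_sum_zeta_term_config_sum[OF assms(1), of "x # r" 0] assms(2)
  by (simp add: qzeta_diagonal infsumI)

lemma qzeta_shift_split:
  assumes q: "norm q < 1" and j: "2 \<le> j"
  shows "qzeta q ((j - 1) # r) (j # r) = qzeta q ((j - 1) # r) ((j - 1) # r) + qzeta q (j # r) (j # r)"
proof -
  let ?D = "decr_lists 0 (length (j # r))"
  obtain i where i: "j = Suc i" "1 \<le> i"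
    using j by (cases j) auto
  have "qzeta q ((j - 1) # r) (j # r) = infsum (\<lambda>ks. zeta_term q (i # r) ks + zeta_term q (j # r) ks) ?D"
    unfolding qzeta_def decr_lists_def[of 0, symmetric]
  proof (rule infsum_cong)
    fix ks assume "ks \<in> ?D"
    then obtain k ks' where ks: "ks = k # ks'" "0 < k"
      by (cases ks) (auto simp: decr_lists_def)
    have "norm (q ^ k) < 1"
      using q ks by (simp add: norm_power power_less_one_iff)
    then have "1 - q ^ k \<noteq> 0"
      by auto
    have "(\<Prod>n<length (j # r). q ^ (ks ! n * ((j - 1) # r) ! n) / (1 - q ^ ks ! n) ^ (j # r) ! n)
        = q ^ (k * i) / (1 - q ^ k) ^ Suc i * (\<Prod>n<length r. qratio q (ks' ! n) ^ (r ! n))"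
      unfolding length_Cons prod.lessThan_Suc_shift by (simp add: ks i flip: qratio_power)
    also have "\<dots> = zeta_term q (i # r) ks + zeta_term q (j # r) ks"
      unfolding qratio_power_add_power_Suc[OF \<open>1 - q ^ k \<noteq> 0\<close>, symmetric] zeta_term_def
        length_Cons prod.lessThan_Suc_shift
      by (simp add: ks i distrib_right)
    finally show "(\<Prod>n<length (j # r). q ^ (ks ! n * ((j - 1) # r) ! n) / (1 - q ^ ks ! n) ^ (j # r) ! n)
        = zeta_term q (i # r) ks + zeta_term q (j # r) ks" .
  qed
  also have "\<dots> = infsum (zeta_term q (i # r)) ?D + infsum (zeta_term q (j # r)) ?D"
    using zeta_term_summable[OF q, of "i # r"] zeta_term_summable[OF q, of "j # r"] i
    by (intro infsum_add) auto
  finally show ?thesis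
    using i by (simp add: qzeta_diagonal)
qed

lemma sum_alternating_consecutive:
  fixes f :: "nat \<Rightarrow> 'a::comm_ring_1"
  assumes "1 \<le> n"
  shows "(\<Sum>j\<in>{2..n}. (-1) ^ j * (f (j - 1) + f j)) = f 1 + (-1) ^ n * f n"
  using assms
proof (induction n rule: dec_induct)
  case (step n)
  then have "{2..Suc n} = insert (Suc n) {2..n}"
    by auto
  with step show ?case
    by (simp add: algebra_simps)
qed simp

lemma Psi_eq_qzeta_diagonal:
  assumes q: "norm q < 1" and k: "1 \<le> k"
  shows "Psi q k r = qzeta q (k # r) (k # r)"
proof -
  let ?Z = "\<lambda>j. qzeta q (j # r) (j # r)"
  have "(\<Sum>j\<in>{2..k}. (-1) ^ j * qzeta q ((j - 1) # r) (j # r))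
      = (\<Sum>j\<in>{2..k}. (-1) ^ j * (?Z (j - 1) + ?Z j))"
    using qzeta_shift_split[OF q] by (intro sum.cong) auto
  also have "\<dots> = ?Z 1 + (-1) ^ k * ?Z k"
    by (rule sum_alternating_consecutive[OF k])
  finally have "Psi q k r = (-1) ^ k * ((-1) ^ k * ?Z k)"
    by (simp add: Psi_def)
  then show ?thesis
    by (simp flip: mult.assoc power_mult_distrib)
qed

definition zeta_blocks :: "(nat \<Rightarrow> nat) \<Rightarrow> (nat \<Rightarrow> nat) \<Rightarrow> nat list \<Rightarrow> nat list" where
  "zeta_blocks x y js = concat (map (\<lambda>j. x j # replicate (y j - 1) 0) js)"

lemma zeta_word_zeta_blocks:
  assumes "\<forall>j\<in>set js. 1 \<le> y j"
  shows "zeta_word (zeta_blocks x y js) = concat (map (\<lambda>j. replicate (x j) False @ replicate (y j) True) js)"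
  using assms
proof (induction js)
  case (Cons j js)
  then obtain t where "y j = Suc t"
    by (cases "y j") auto
  with Cons show ?case
    by (simp add: zeta_blocks_def replicate_append_same)
qed (simp add: zeta_blocks_def)

lemma dual_zeta_word_zeta_blocks:
  assumes "\<forall>j\<in>set js. 1 \<le> x j \<and> 1 \<le> y j"
  shows "map Not (rev (zeta_word (zeta_blocks x y js))) = zeta_word (zeta_blocks y x (rev js))"
  using assms by (simp add: zeta_word_zeta_blocks rev_map rev_concat map_concat comp_def)

theorem theorem8p5:
  fixes q :: complex and l :: nat and a b :: "nat \<Rightarrow> nat"
  assumes "norm q < 1"
    and "1 \<le> l"
    and "\<forall>j\<in>{1..l}. 1 \<le> a j \<and> 1 \<le> b j"
  shows "Psi q (a 1)
           (replicate (b 1 - 1) 0 @ concat (map (\<lambda>j. a j # replicate (b j - 1) 0) [2..<Suc l]))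
       = Psi q (b l)
           (replicate (a l - 1) 0 @ concat (map (\<lambda>j. b j # replicate (a j - 1) 0) (rev [1..<l])))"
    (is "Psi q (a 1) ?r = Psi q (b l) ?r'")
proof -
  note q = assms(1)
  have ab: "\<forall>j\<in>set [1..<Suc l]. 1 \<le> a j \<and> 1 \<le> b j" and a1: "1 \<le> a 1" and bl: "1 \<le> b l"
    using assms(2,3) by auto
  have "[1..<Suc l] = 1 # [2..<Suc l]" "rev [1..<Suc l] = l # rev [1..<l]"
    using assms(2) by (simp_all add: upt_conv_Cons numeral_2_eq_2)
  then have lhs: "a 1 # ?r = zeta_blocks a b [1..<Suc l]" and rhs: "b l # ?r' = zeta_blocks b a (rev [1..<Suc l])"
    by (simp_all add: zeta_blocks_def)
  have "Psi q (a 1) ?r = config_sum q (zeta_word (zeta_blocks a b [1..<Suc l])) 0"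
    unfolding Psi_eq_qzeta_diagonal[OF q a1] qzeta_diagonal_eq_config_sum[OF q a1] by (simp only: lhs)
  also have "\<dots> = config_sum q (zeta_word (zeta_blocks b a (rev [1..<Suc l]))) 0"
    unfolding dual_zeta_word_zeta_blocks[OF ab, symmetric] config_sum_dual ..
  also have "\<dots> = Psi q (b l) ?r'"
    unfolding Psi_eq_qzeta_diagonal[OF q bl] qzeta_diagonal_eq_config_sum[OF q bl] by (simp only: rhs)
  finally show ?thesis .
qed

end
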